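(* Let $R$ be a unital commutative Hausdorff topological ring with dense group of units, $E,F\in\mathrm{TopSMod}_R$, $\mathcal U\subset\underline E$ an open subfunctor and $f:\mathcal U\Rightarrow\underline F$ a natural transformation of functors $\Lambda\to\mathrm{Top}$ such that each $f_\lambda$, $\lambda\in\Lambda$, is $\mathcal C^1$ over $R$. Then for every $\lambda\in\Lambda$, every $x\in\mathcal U(\lambda)$, every $p$ with $\theta_p\in\lambda$ and every $y\in\underline E(\lambda\theta_p)$, $$f_\lambda(x+y)=f_\lambda(x)+df_\lambda(x)y.$$ If $R$, $E$ and $F$ are locally $k_\omega$, it suffices to assume that $f_\infty$ is $\mathcal C^1$ over $R$, and the conclusion then holds for all $\lambda\in\Lambda^\infty$ (with $f_{\lambda^\infty}=f_\infty$).
   Context: $\lambda^n=R[\theta_1,\dots,\theta_n]$, $\lambda^\infty=R[\theta_i:i\in\mathbb N]$ Grassmann algebras on odd generators ($\lambda^n=\bigoplus_I R\theta_I$ product topology; $\lambda^\infty$ direct limit topology). $\Lambda$ (resp. $\Lambda^\infty$): category of the $\lambda^n$, $n<\infty$ (resp. also $\lambda^\infty$), morphisms even unital $R$-algebra morphisms; $\varepsilon:\lambda\to R$ kills all $\theta_i$. For a Hausdorff graded topological $R$-module $E=E_0\oplus E_1$ ($E\in\mathrm{TopSMod}_R$): $E\otimes\lambda^N=\prod_{|I|\le N}E\theta_I$ (product topology), $E\otimes\lambda^\infty=\varinjlim E\otimes\lambda^N$ in Top, $\underline E(\lambda)=(E\otimes\lambda)_0$ with functoriality $\mathrm{id}\otimes\varphi$,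 and $\underline E(\lambda\theta_p)=(E\otimes\lambda\theta_p)_0\subset\underline E(\lambda)$. $\underline E(\lambda)$ is a topological $R$-module for $\lambda\in\Lambda$, and also for $\lambda^\infty$ when $R,E$ are locally $k_\omega$ (Hausdorff with every point having an open neighbourhood that is the topological direct limit of an increasing sequence of compact subsets). An open subfunctor $\mathcal U\subset\underline E$ has all $\mathcal U(\lambda)$ open and satisfies $\mathcal U(\lambda)=\underline E(\varepsilon)^{-1}(\mathcal U(R))$; this formula defines $\mathcal U(\lambda^\infty)$, and $f_\infty:\mathcal U(\lambda^\infty)\to\underline F(\lambda^\infty)$ is defined by $f_\infty|_{\mathcal U(\lambda^n)}=f_{\lambda^n}$. $\mathcal C^1$ over $R$ (Bertram–Glöckner–Neeb): a continuous $g:V\to Y$ ($V$ open in a Hausdorff topological $R$-module) is $\mathcal C^1$ if there is a continuous $g^{[1]}$ on $\{(x,v,t):x,x+tv\in V,t\in R\}$ with $g(x+tv)-g(x)=t\,g^{[1]}(x,v,t)$; then $dg(x)v=g^{[1]}(x,v,0)$. *)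

theory Defs
  imports "HOL-Analysis.Analysis" "HOL-Library.Extended_Nat"
begin

text \<open>Odd generators are indexed by natural numbers starting at 0;
  the Grassmann algebra lambda^n (n :: enat, n = \<infinity> for lambda^\<infinity>) is generated by the
  theta_i with i < n. A monomial theta_I (I a finite set of indices, multiplied in
  increasing order) is represented by I; an element of lambda^n (resp. of E tensor lambda^n)
  is a finitely supported function from index sets to R (resp. to E).\<close>

definition idx_ok :: "enat \<Rightarrow> nat set \<Rightarrow> bool" where
  "idx_ok n I \<longleftrightarrow> finite I \<and> (\<forall>i\<in>I. enat i < n)"

definition Lam :: "enat \<Rightarrow> (nat set \<Rightarrow> 'r::comm_ring_1) set" where
  "Lam n = {a. finite {I. a I \<noteq> 0} \<and> (\<forall>I. a I \<noteq> 0 \<longrightarrow> idx_ok n I)}"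

definition gbasis :: "nat set \<Rightarrow> nat set \<Rightarrow> 'r::comm_ring_1" where
  "gbasis I = (\<lambda>K. if K = I then 1 else 0)"

definition gone :: "nat set \<Rightarrow> 'r::comm_ring_1" where
  "gone = gbasis {}"

definition gadd :: "(nat set \<Rightarrow> 'r::comm_ring_1) \<Rightarrow> (nat set \<Rightarrow> 'r) \<Rightarrow> nat set \<Rightarrow> 'r" where
  "gadd a b = (\<lambda>I. a I + b I)"

definition gscale :: "'r::comm_ring_1 \<Rightarrow> (nat set \<Rightarrow> 'r) \<Rightarrow> nat set \<Rightarrow> 'r" where
  "gscale r a = (\<lambda>I. r * a I)"

text \<open>Sign of theta_I theta_J = gsign I J * theta_(I union J) for disjoint I, J.\<close>
definition gsign :: "nat set \<Rightarrow> nat set \<Rightarrow> 'r::comm_ring_1" where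
  "gsign I J = (-1) ^ card {(i, j). i \<in> I \<and> j \<in> J \<and> j < i}"

definition gmul :: "(nat set \<Rightarrow> 'r::comm_ring_1) \<Rightarrow> (nat set \<Rightarrow> 'r) \<Rightarrow> nat set \<Rightarrow> 'r" where
  "gmul a b = (\<lambda>K. \<Sum>I\<in>Pow K. gsign I (K - I) * a I * b (K - I))"

definition geven :: "(nat set \<Rightarrow> 'r::comm_ring_1) \<Rightarrow> bool" where
  "geven a \<longleftrightarrow> (\<forall>I. odd (card I) \<longrightarrow> a I = 0)"

definition godd :: "(nat set \<Rightarrow> 'r::comm_ring_1) \<Rightarrow> bool" where
  "godd a \<longleftrightarrow> (\<forall>I. even (card I) \<longrightarrow> a I = 0)"

text \<open>Morphisms lambda^n \<rightarrow> lambda^m of the category Lambda^\<infinity>: even unital R-algebra morphisms.\<close>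
definition gmorph :: "enat \<Rightarrow> enat \<Rightarrow> ((nat set \<Rightarrow> 'r::comm_ring_1) \<Rightarrow> (nat set \<Rightarrow> 'r)) \<Rightarrow> bool" where
  "gmorph n m \<phi> \<longleftrightarrow>
     (\<forall>a\<in>Lam n. \<phi> a \<in> Lam m) \<and>
     (\<forall>a\<in>Lam n. \<forall>b\<in>Lam n. \<phi> (gadd a b) = gadd (\<phi> a) (\<phi> b)) \<and>
     (\<forall>r. \<forall>a\<in>Lam n. \<phi> (gscale r a) = gscale r (\<phi> a)) \<and>
     \<phi> gone = gone \<and>
     (\<forall>a\<in>Lam n. \<forall>b\<in>Lam n. \<phi> (gmul a b) = gmul (\<phi> a) (\<phi> b)) \<and>
     (\<forall>a\<in>Lam n. geven a \<longrightarrow> geven (\<phi> a)) \<and>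
     (\<forall>a\<in>Lam n. godd a \<longrightarrow> godd (\<phi> a))"

definition geps :: "(nat set \<Rightarrow> 'r::comm_ring_1) \<Rightarrow> nat set \<Rightarrow> 'r" where
  "geps a = (\<lambda>I. if I = {} then a {} else 0)"

definition top_module :: "('r::{comm_ring_1,topological_space} \<Rightarrow> 'e::{topological_ab_group_add} \<Rightarrow> 'e) \<Rightarrow> bool" where
  "top_module s \<longleftrightarrow> module s \<and> continuous_on UNIV (\<lambda>p. s (fst p) (snd p))"

text \<open>Hausdorff graded topological R-module E = E0 \<oplus> E1 (topological direct sum of
  two submodules): the projection onto E0 along E1 is continuous.\<close>
definition graded_top_module ::
  "('r::{comm_ring_1,topological_space} \<Rightarrow> 'e::{topological_ab_group_add,t2_space} \<Rightarrow> 'e) \<Rightarrow> 'e set \<Rightarrow> 'e set \<Rightarrow> bool" where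
  "graded_top_module s E0 E1 \<longleftrightarrow> top_module s \<and>
     module.subspace s E0 \<and> module.subspace s E1 \<and> E0 \<inter> E1 = {0} \<and>
     (\<forall>x. \<exists>a\<in>E0. \<exists>b\<in>E1. x = a + b) \<and>
     continuous_on UNIV (\<lambda>x. THE a. a \<in> E0 \<and> x - a \<in> E1)"

definition TE :: "enat \<Rightarrow> (nat set \<Rightarrow> 'e::zero) set" where
  "TE n = {x. finite {I. x I \<noteq> 0} \<and> (\<forall>I. x I \<noteq> 0 \<longrightarrow> idx_ok n I)}"

definition TEtop_fin :: "nat \<Rightarrow> (nat set \<Rightarrow> 'e::{zero,topological_space}) topology" where
  "TEtop_fin N = pullback_topology (TE (enat N)) (\<lambda>x. restrict x (Pow {..<N}))
      (product_topology (\<lambda>_. euclidean) (Pow {..<N}))"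

text \<open>Product topology for finite n, direct limit topology of the E tensor lambda^N for n = \<infinity>.\<close>
definition TEtop :: "enat \<Rightarrow> (nat set \<Rightarrow> 'e::{zero,topological_space}) topology" where
  "TEtop n = (case n of enat N \<Rightarrow> TEtop_fin N
     | \<infinity> \<Rightarrow> topology (\<lambda>A. A \<subseteq> TE \<infinity> \<and> (\<forall>N. openin (TEtop_fin N) (A \<inter> TE (enat N)))))"

text \<open>underline E(lambda^n) = (E tensor lambda^n)_0\<close>
definition Ebar :: "'e set \<Rightarrow> 'e set \<Rightarrow> enat \<Rightarrow> (nat set \<Rightarrow> 'e::zero) set" where
  "Ebar E0 E1 n = {x \<in> TE n. \<forall>I. x I \<in> (if even (card I) then E0 else E1)}"

definition Etop :: "'e set \<Rightarrow> 'e set \<Rightarrow> enat \<Rightarrow> (nat set \<Rightarrow> 'e::{zero,topological_space}) topology" where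
  "Etop E0 E1 n = subtopology (TEtop n) (Ebar E0 E1 n)"

text \<open>underline E(lambda theta_p) = (E tensor lambda theta_p)_0\<close>
definition Ebar_ideal :: "'e set \<Rightarrow> 'e set \<Rightarrow> enat \<Rightarrow> nat \<Rightarrow> (nat set \<Rightarrow> 'e::zero) set" where
  "Ebar_ideal E0 E1 n p = {x \<in> Ebar E0 E1 n. \<forall>I. p \<notin> I \<longrightarrow> x I = 0}"

text \<open>Functoriality: underline E(phi) = id tensor phi.\<close>
definition Emap :: "('r::comm_ring_1 \<Rightarrow> 'e::ab_group_add \<Rightarrow> 'e) \<Rightarrow> ((nat set \<Rightarrow> 'r) \<Rightarrow> (nat set \<Rightarrow> 'r))
    \<Rightarrow> (nat set \<Rightarrow> 'e) \<Rightarrow> nat set \<Rightarrow> 'e" where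
  "Emap s \<phi> x = (\<lambda>J. \<Sum>I\<in>{I. x I \<noteq> 0}. s (\<phi> (gbasis I) J) (x I))"

definition vadd :: "(nat set \<Rightarrow> 'e::ab_group_add) \<Rightarrow> (nat set \<Rightarrow> 'e) \<Rightarrow> nat set \<Rightarrow> 'e" where
  "vadd x y = (\<lambda>I. x I + y I)"

definition vdiff :: "(nat set \<Rightarrow> 'e::ab_group_add) \<Rightarrow> (nat set \<Rightarrow> 'e) \<Rightarrow> nat set \<Rightarrow> 'e" where
  "vdiff x y = (\<lambda>I. x I - y I)"

definition vscale :: "('r \<Rightarrow> 'e \<Rightarrow> 'e) \<Rightarrow> 'r \<Rightarrow> (nat set \<Rightarrow> 'e) \<Rightarrow> nat set \<Rightarrow> 'e" where
  "vscale s t x = (\<lambda>I. s t (x I))"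

definition C1_dom :: "('r::comm_ring_1 \<Rightarrow> 'e::ab_group_add \<Rightarrow> 'e) \<Rightarrow> (nat set \<Rightarrow> 'e) topology
    \<Rightarrow> (nat set \<Rightarrow> 'e) set \<Rightarrow> ((nat set \<Rightarrow> 'e) \<times> (nat set \<Rightarrow> 'e) \<times> 'r) set" where
  "C1_dom sE X V = {(x, v, t). x \<in> V \<and> v \<in> topspace X \<and> vadd x (vscale sE t v) \<in> V}"

definition C1_wit ::
  "('r::{comm_ring_1,topological_space} \<Rightarrow> 'e::ab_group_add \<Rightarrow> 'e) \<Rightarrow> ('r \<Rightarrow> 'f::ab_group_add \<Rightarrow> 'f)
   \<Rightarrow> (nat set \<Rightarrow> 'e) topology \<Rightarrow> (nat set \<Rightarrow> 'f) topology \<Rightarrow> (nat set \<Rightarrow> 'e) set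
   \<Rightarrow> ((nat set \<Rightarrow> 'e) \<Rightarrow> (nat set \<Rightarrow> 'f))
   \<Rightarrow> ((nat set \<Rightarrow> 'e) \<times> (nat set \<Rightarrow> 'e) \<times> 'r \<Rightarrow> (nat set \<Rightarrow> 'f)) \<Rightarrow> bool" where
  "C1_wit sE sF X Y V g g1 \<longleftrightarrow>
     continuous_map (subtopology (prod_topology X (prod_topology X euclidean)) (C1_dom sE X V)) Y g1 \<and>
     (\<forall>(x, v, t)\<in>C1_dom sE X V. vdiff (g (vadd x (vscale sE t v))) (g x) = vscale sF t (g1 (x, v, t)))"

definition is_C1 ::
  "('r::{comm_ring_1,topological_space} \<Rightarrow> 'e::ab_group_add \<Rightarrow> 'e) \<Rightarrow> ('r \<Rightarrow> 'f::ab_group_add \<Rightarrow> 'f)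
   \<Rightarrow> (nat set \<Rightarrow> 'e) topology \<Rightarrow> (nat set \<Rightarrow> 'f) topology \<Rightarrow> (nat set \<Rightarrow> 'e) set
   \<Rightarrow> ((nat set \<Rightarrow> 'e) \<Rightarrow> (nat set \<Rightarrow> 'f)) \<Rightarrow> bool" where
  "is_C1 sE sF X Y V g \<longleftrightarrow> openin X V \<and> continuous_map (subtopology X V) Y g \<and>
     (\<exists>g1. C1_wit sE sF X Y V g g1)"

text \<open>dg(x)v = g^[1](x,v,0) (g^[1] is unique on its domain when the units are dense).\<close>
definition dC1 ::
  "('r::{comm_ring_1,topological_space} \<Rightarrow> 'e::ab_group_add \<Rightarrow> 'e) \<Rightarrow> ('r \<Rightarrow> 'f::ab_group_add \<Rightarrow> 'f)
   \<Rightarrow> (nat set \<Rightarrow> 'e) topology \<Rightarrow> (nat set \<Rightarrow> 'f) topology \<Rightarrow> (nat set \<Rightarrow> 'e) set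
   \<Rightarrow> ((nat set \<Rightarrow> 'e) \<Rightarrow> (nat set \<Rightarrow> 'f)) \<Rightarrow> (nat set \<Rightarrow> 'e) \<Rightarrow> (nat set \<Rightarrow> 'e) \<Rightarrow> (nat set \<Rightarrow> 'f)" where
  "dC1 sE sF X Y V g x v = (SOME g1. C1_wit sE sF X Y V g g1) (x, v, 0)"

definition locally_kw :: "'a topology \<Rightarrow> bool" where
  "locally_kw X \<longleftrightarrow> Hausdorff_space X \<and>
    (\<forall>x\<in>topspace X. \<exists>U K. openin X U \<and> x \<in> U \<and> (\<forall>n. compactin X (K n)) \<and>
       (\<forall>n. K n \<subseteq> K (Suc n)) \<and> U = (\<Union>n. K n) \<and>
       (\<forall>A. A \<subseteq> U \<longrightarrow> (openin (subtopology X U) A \<longleftrightarrow>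
                              (\<forall>n. openin (subtopology X (K n)) (A \<inter> K n)))))"

end

theory Submission
  imports Defs
begin

text \<open>For c in R let theta_scale p c be the endomorphism of lambda with theta_p \<mapsto> c theta_p. If a has
  no theta_p-component and w lies in the ideal generated by theta_p, then a + c w is the image of a + w
  under theta_scale p c, so naturality of f gives f(a + c w) = f(a) + c B(a, w), where B(a, w) is the
  theta_p-part of f(a + w). Hence the C^1 difference quotients of f along such lines are constant on the
  units; as the units are dense and f^[1] is continuous, they are also constant at t = 0. This makes
  B(a, -) additive, and splitting an arbitrary x into its theta_p-free part and an element of the ideal
  gives f(x + y) = f(x) + f^[1](x, y, 0). On lambda^\<infinity> the argument runs in the direct-limit
  topology, and the finite levels inherit a C^1 witness by truncation.\<close>

section \<open>Topologies on E tensor lambda\<close>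

lemma TE_finite_support: "x \<in> TE n \<Longrightarrow> finite {I. x I \<noteq> 0}"
  unfolding TE_def by auto

lemma TE_zero_outside: "x \<in> TE (enat N) \<Longrightarrow> \<not> J \<subseteq> {..<N} \<Longrightarrow> x J = 0"
  unfolding TE_def idx_ok_def by auto

lemma TE_mono: "N \<le> M \<Longrightarrow> TE (enat N) \<subseteq> TE (enat M)"
  unfolding TE_def idx_ok_def by (auto intro: less_le_trans)

lemma TE_enat_subset_infinity: "TE (enat N) \<subseteq> TE \<infinity>"
  unfolding TE_def idx_ok_def by auto

lemma TE_infinity_level:
  assumes x: "x \<in> TE \<infinity>"
  obtains N where "x \<in> TE (enat N)"
proof -
  have "finite (\<Union>{I. x I \<noteq> 0})"
    using x unfolding TE_def idx_ok_def by auto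
  then obtain N where N: "\<Union>{I. x I \<noteq> 0} \<subseteq> {..<N}"
    using finite_nat_bounded by blast
  have "idx_ok (enat N) I" if "x I \<noteq> 0" for I
  proof -
    have "I \<subseteq> {..<N}" and "finite I"
      using N x that unfolding TE_def idx_ok_def by blast+
    then show ?thesis
      unfolding idx_ok_def by auto
  qed
  with x have "x \<in> TE (enat N)"
    unfolding TE_def by blast
  then show ?thesis
    by (rule that)
qed

lemma TE_infinity_common_level:
  assumes "x \<in> TE \<infinity>" and "y \<in> TE \<infinity>"
  obtains N where "x \<in> TE (enat N)" and "y \<in> TE (enat N)"
proof -
  obtain N1 where "x \<in> TE (enat N1)"
    using assms(1) by (rule TE_infinity_level)
  moreover obtain N2 where "y \<in> TE (enat N2)"
    using assms(2) by (rule TE_infinity_level)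
  ultimately have "x \<in> TE (enat (max N1 N2))" and "y \<in> TE (enat (max N1 N2))"
    using TE_mono[of N1 "max N1 N2"] TE_mono[of N2 "max N1 N2"] by auto
  then show ?thesis
    by (rule that)
qed

lemma Ebar_subset_TE: "Ebar A B n \<subseteq> TE n"
  unfolding Ebar_def by auto

lemma Ebar_change_level: "x \<in> Ebar A B n \<Longrightarrow> x \<in> TE m \<Longrightarrow> x \<in> Ebar A B m"
  unfolding Ebar_def by blast

lemma Ebar_enat_subset_infinity: "Ebar A B (enat N) \<subseteq> Ebar A B \<infinity>"
  unfolding Ebar_def using TE_enat_subset_infinity by blast

lemma topspace_TEtop_fin: "topspace (TEtop_fin N) = TE (enat N)"
  unfolding TEtop_fin_def topspace_pullback_topology by auto

lemma continuous_map_TEtop_fin_eval: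
  "continuous_map (TEtop_fin N) euclidean (\<lambda>x::nat set \<Rightarrow> 'e::{zero,topological_space}. x J)"
proof (cases "J \<in> Pow {..<N}")
  case True
  have "continuous_map (TEtop_fin N) euclidean
          ((\<lambda>g. g J) \<circ> (\<lambda>x::nat set \<Rightarrow> 'e. restrict x (Pow {..<N})))"
    unfolding TEtop_fin_def
    by (rule continuous_map_pullback, rule continuous_map_product_projection[OF True])
  moreover have "(\<lambda>g. g J) \<circ> (\<lambda>x::nat set \<Rightarrow> 'e. restrict x (Pow {..<N})) = (\<lambda>x. x J)"
    using True by auto
  ultimately show ?thesis
    by (simp only:)
next
  case False
  show ?thesis
    by (rule continuous_map_eq[of _ _ "\<lambda>x. 0"])
      (use False TE_zero_outside in \<open>auto simp: topspace_TEtop_fin\<close>)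
qed

lemma continuous_map_into_TEtop_fin:
  assumes "\<And>x. x \<in> topspace X \<Longrightarrow> h x \<in> TE (enat N)"
    and "\<And>J. continuous_map X euclidean (\<lambda>x. h x J)"
  shows "continuous_map X (TEtop_fin N) h"
  unfolding TEtop_fin_def
proof (rule continuous_map_pullback')
  show "continuous_map X (product_topology (\<lambda>_. euclidean) (Pow {..<N}))
          ((\<lambda>x. restrict x (Pow {..<N})) \<circ> h)"
    unfolding continuous_map_componentwise using assms(2) by auto
qed (use assms(1) in auto)

lemma openin_TEtop_infinity:
  "openin (TEtop \<infinity>) A \<longleftrightarrow> A \<subseteq> TE \<infinity> \<and> (\<forall>N. openin (TEtop_fin N) (A \<inter> TE (enat N)))"
proof -
  define P :: "(nat set \<Rightarrow> 'a) set \<Rightarrow> bool"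
    where "P A \<longleftrightarrow> A \<subseteq> TE \<infinity> \<and> (\<forall>N. openin (TEtop_fin N) (A \<inter> TE (enat N)))" for A
  have "istopology P"
    unfolding istopology_def
  proof (intro conjI allI impI)
    fix S T
    assume "P S" "P T"
    moreover have "S \<inter> T \<inter> TE (enat N) = (S \<inter> TE (enat N)) \<inter> (T \<inter> TE (enat N))" for N
      by blast
    ultimately show "P (S \<inter> T)"
      unfolding P_def by (simp add: openin_Int le_infI1)
  next
    fix K
    assume K: "\<forall>A\<in>K. P A"
    show "P (\<Union>K)"
      unfolding P_def
    proof (intro conjI allI)
      show "\<Union>K \<subseteq> TE \<infinity>"
        using K by (auto simp: P_def)
      fix N
      have "openin (TEtop_fin N) (\<Union>((\<lambda>A. A \<inter> TE (enat N)) ` K))"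
        using K by (intro openin_Union) (auto simp: P_def)
      moreover have "\<Union>K \<inter> TE (enat N) = \<Union>((\<lambda>A. A \<inter> TE (enat N)) ` K)"
        by blast
      ultimately show "openin (TEtop_fin N) (\<Union>K \<inter> TE (enat N))"
        by (simp only:)
    qed
  qed
  then show ?thesis
    unfolding TEtop_def P_def[abs_def] by (simp add: topology_inverse')
qed

lemma topspace_TEtop_infinity: "topspace (TEtop \<infinity>) = TE \<infinity>"
proof
  show "topspace (TEtop \<infinity>) \<subseteq> TE \<infinity>"
    using openin_TEtop_infinity openin_topspace by blast
  have "openin (TEtop_fin N) (TE \<infinity> \<inter> TE (enat N))" for N
    using openin_topspace[of "TEtop_fin N"]
    by (simp add: topspace_TEtop_fin Int_absorb1[OF TE_enat_subset_infinity])
  then have "openin (TEtop \<infinity>) (TE \<infinity>)"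
    unfolding openin_TEtop_infinity by blast
  then show "TE \<infinity> \<subseteq> topspace (TEtop \<infinity>)"
    by (rule openin_subset)
qed

lemma continuous_map_TEtop_infinity_eval:
  "continuous_map (TEtop \<infinity>) euclidean (\<lambda>x::nat set \<Rightarrow> 'e::{zero,topological_space}. x J)"
  unfolding continuous_map_def
proof (intro conjI allI impI)
  fix W :: "'e set"
  assume W: "openin euclidean W"
  show "openin (TEtop \<infinity>) {x \<in> topspace (TEtop \<infinity>). x J \<in> W}"
    unfolding openin_TEtop_infinity topspace_TEtop_infinity
  proof (intro conjI allI)
    fix N
    have "{x \<in> TE \<infinity>. x J \<in> W} \<inter> TE (enat N) = {x \<in> topspace (TEtop_fin N). x J \<in> W}"
      using TE_enat_subset_infinity by (auto simp: topspace_TEtop_fin)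
    then show "openin (TEtop_fin N) ({x::nat set \<Rightarrow> 'e \<in> TE \<infinity>. x J \<in> W} \<inter> TE (enat N))"
      using openin_continuous_map_preimage[OF continuous_map_TEtop_fin_eval W] by simp
  qed blast
qed simp

lemma continuous_map_TEtop_fin_infinity:
  "continuous_map (TEtop_fin N) (TEtop \<infinity>) (\<lambda>x::nat set \<Rightarrow> 'e::{zero,topological_space}. x)"
  unfolding continuous_map_def
proof (intro conjI allI impI)
  fix A :: "(nat set \<Rightarrow> 'e) set"
  assume "openin (TEtop \<infinity>) A"
  moreover have "{x \<in> topspace (TEtop_fin N). x \<in> A} = A \<inter> TE (enat N)"
    by (auto simp: topspace_TEtop_fin)
  ultimately show "openin (TEtop_fin N) {x \<in> topspace (TEtop_fin N). x \<in> A}"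
    unfolding openin_TEtop_infinity by simp
qed (use TE_enat_subset_infinity in \<open>auto simp: topspace_TEtop_fin topspace_TEtop_infinity\<close>)

lemma Etop_enat: "Etop A B (enat N) = subtopology (TEtop_fin N) (Ebar A B (enat N))"
  unfolding Etop_def TEtop_def by simp

lemma topspace_Etop: "topspace (Etop A B n) = Ebar A B n"
proof (cases n)
  case (enat N)
  then show ?thesis
    using Ebar_subset_TE[of A B n] by (auto simp: Etop_enat topspace_TEtop_fin)
next
  case infinity
  then show ?thesis
    using Ebar_subset_TE[of A B n] by (auto simp: Etop_def topspace_TEtop_infinity)
qed

lemma continuous_map_Etop_eval: "continuous_map (Etop A B n) euclidean (\<lambda>x. x J)"
proof (cases n)
  case (enat N)
  show ?thesis
    unfolding enat Etop_enat by (rule continuous_map_from_subtopology[OF continuous_map_TEtop_fin_eval])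
next
  case infinity
  show ?thesis
    unfolding infinity Etop_def by (rule continuous_map_from_subtopology[OF continuous_map_TEtop_infinity_eval])
qed

lemma continuous_map_into_Etop_enat:
  assumes "\<And>x. x \<in> topspace X \<Longrightarrow> h x \<in> Ebar A B (enat N)"
    and "\<And>J. continuous_map X euclidean (\<lambda>x. h x J)"
  shows "continuous_map X (Etop A B (enat N)) h"
  unfolding Etop_enat continuous_map_in_subtopology
proof
  show "continuous_map X (TEtop_fin N) h"
    using assms Ebar_subset_TE by (blast intro: continuous_map_into_TEtop_fin)
qed (use assms(1) in auto)

lemma continuous_map_Etop_enat_infinity: "continuous_map (Etop A B (enat N)) (Etop A B \<infinity>) (\<lambda>x. x)"
  unfolding Etop_enat Etop_def[of A B \<infinity>] continuous_map_in_subtopology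
proof
  show "continuous_map (subtopology (TEtop_fin N) (Ebar A B (enat N))) (TEtop \<infinity>) (\<lambda>x. x)"
    by (rule continuous_map_from_subtopology[OF continuous_map_TEtop_fin_infinity])
  show "(\<lambda>x. x) \<in> topspace (subtopology (TEtop_fin N) (Ebar A B (enat N))) \<rightarrow> Ebar A B \<infinity>"
    using Ebar_enat_subset_infinity[of A B N] by auto
qed

definition truncate :: "nat \<Rightarrow> (nat set \<Rightarrow> 'e::zero) \<Rightarrow> nat set \<Rightarrow> 'e" where
  "truncate N x = (\<lambda>J. if J \<subseteq> {..<N} then x J else 0)"

section \<open>Even parts of graded modules\<close>

lemma graded_top_module_module: "graded_top_module s A B \<Longrightarrow> module s"
  by (simp add: graded_top_module_def top_module_def)

lemma graded_top_module_subspaces: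
  "graded_top_module s A B \<Longrightarrow> module.subspace s A"
  "graded_top_module s A B \<Longrightarrow> module.subspace s B"
  by (simp_all add: graded_top_module_def)

lemma graded_top_module_continuous_scale_left:
  assumes "graded_top_module s A B"
  shows "continuous_on UNIV (\<lambda>t. s t c)"
proof -
  have "continuous_on UNIV (\<lambda>p. s (fst p) (snd p))"
    using assms by (simp add: graded_top_module_def top_module_def)
  then have "continuous_on UNIV (\<lambda>t. (\<lambda>p. s (fst p) (snd p)) (t, c))"
    by (rule continuous_on_compose2) (auto intro!: continuous_intros)
  then show ?thesis
    by simp
qed

lemma Ebar_componentwise:
  assumes x: "x \<in> Ebar A B n" and y: "y \<in> Ebar A B n"
    and zero: "\<And>I. x I = 0 \<Longrightarrow> y I = 0 \<Longrightarrow> h I = 0"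
    and even: "\<And>I. x I \<in> A \<Longrightarrow> y I \<in> A \<Longrightarrow> h I \<in> A"
    and odd: "\<And>I. x I \<in> B \<Longrightarrow> y I \<in> B \<Longrightarrow> h I \<in> B"
  shows "h \<in> Ebar A B n"
proof -
  have "{I. h I \<noteq> 0} \<subseteq> {I. x I \<noteq> 0} \<union> {I. y I \<noteq> 0}"
    using zero by blast
  moreover have "finite ({I. x I \<noteq> 0} \<union> {I. y I \<noteq> 0})"
    using x y Ebar_subset_TE TE_finite_support by blast
  ultimately have "finite {I. h I \<noteq> 0}"
    by (rule finite_subset)
  moreover have "idx_ok n I" if "h I \<noteq> 0" for I
    using that zero x y unfolding Ebar_def TE_def by blast
  moreover have "h I \<in> (if even (card I) then A else B)" for I
  proof -
    have "x I \<in> (if even (card I) then A else B)" "y I \<in> (if even (card I) then A else B)"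
      using x y unfolding Ebar_def by blast+
    then show ?thesis
      using even odd by (cases "even (card I)") simp_all
  qed
  ultimately show ?thesis
    unfolding Ebar_def TE_def by blast
qed

context
  fixes s :: "'r::{comm_ring_1,topological_space} \<Rightarrow> 'e::{topological_ab_group_add,t2_space} \<Rightarrow> 'e"
    and A B :: "'e set"
  assumes graded: "graded_top_module s A B"
begin

interpretation M: module s
  using graded by (rule graded_top_module_module)

lemma Ebar_vadd:
  assumes "x \<in> Ebar A B n" and "y \<in> Ebar A B n"
  shows "vadd x y \<in> Ebar A B n"
  by (rule Ebar_componentwise[OF assms])
    (use graded_top_module_subspaces[OF graded] in \<open>auto simp: vadd_def M.subspace_add\<close>)

lemma Ebar_vscale:
  assumes "x \<in> Ebar A B n"
  shows "vscale s c x \<in> Ebar A B n"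
  by (rule Ebar_componentwise[OF assms assms])
    (use graded_top_module_subspaces[OF graded] in \<open>auto simp: vscale_def M.subspace_scale\<close>)

lemma Ebar_restrict:
  assumes "x \<in> Ebar A B n"
  shows "(\<lambda>J. if P J then x J else 0) \<in> Ebar A B n"
  by (rule Ebar_componentwise[OF assms assms])
    (use graded_top_module_subspaces[OF graded] in \<open>auto simp: M.subspace_0\<close>)

lemma Ebar_truncate: "x \<in> Ebar A B n \<Longrightarrow> truncate N x \<in> Ebar A B (enat N)"
proof (rule Ebar_change_level)
  assume "x \<in> Ebar A B n"
  then show "truncate N x \<in> Ebar A B n"
    unfolding truncate_def by (rule Ebar_restrict)
  then have "finite {J. truncate N x J \<noteq> 0}"
    using Ebar_subset_TE TE_finite_support by blast
  moreover have "idx_ok (enat N) J" if "truncate N x J \<noteq> 0" for J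
  proof -
    have "J \<subseteq> {..<N}"
      using that by (auto simp: truncate_def split: if_splits)
    then show ?thesis
      unfolding idx_ok_def by (auto intro: finite_subset[OF _ finite_lessThan])
  qed
  ultimately show "truncate N x \<in> TE (enat N)"
    unfolding TE_def by blast
qed

lemma continuous_map_truncate: "continuous_map (Etop A B n) (Etop A B (enat N)) (truncate N)"
proof (rule continuous_map_into_Etop_enat)
  show "truncate N x \<in> Ebar A B (enat N)" if "x \<in> topspace (Etop A B n)" for x
    using that by (simp add: topspace_Etop Ebar_truncate)
  show "continuous_map (Etop A B n) euclidean (\<lambda>x. truncate N x J)" for J
    by (cases "J \<subseteq> {..<N}") (simp_all add: truncate_def continuous_map_Etop_eval)
qed

lemma continuous_map_Etop_line:
  assumes z: "z \<in> Ebar A B n" and w: "w \<in> Ebar A B n"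
  shows "continuous_map euclidean (Etop A B n) (\<lambda>t. vadd z (vscale s t w))"
proof -
  have enat_case: "continuous_map euclidean (Etop A B (enat N)) (\<lambda>t. vadd z (vscale s t w))"
    if "z \<in> Ebar A B (enat N)" "w \<in> Ebar A B (enat N)" for N
  proof (rule continuous_map_into_Etop_enat)
    show "vadd z (vscale s t w) \<in> Ebar A B (enat N)" for t
      using that by (simp add: Ebar_vadd Ebar_vscale)
    show "continuous_map euclidean euclidean (\<lambda>t. vadd z (vscale s t w) J)" for J
    proof -
      have "continuous_on UNIV (\<lambda>t. z J + s t (w J))"
        by (intro continuous_intros graded_top_module_continuous_scale_left[OF graded])
      then show ?thesis
        by (simp add: vadd_def vscale_def)
    qed
  qed
  show ?thesis
  proof (cases n)
    case infinity
    have "z \<in> TE \<infinity>" "w \<in> TE \<infinity>"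
      using z w infinity Ebar_subset_TE by auto
    then obtain N where "z \<in> TE (enat N)" "w \<in> TE (enat N)"
      by (rule TE_infinity_common_level)
    then have "continuous_map euclidean (Etop A B (enat N)) (\<lambda>t. vadd z (vscale s t w))"
      using z w by (intro enat_case) (auto intro: Ebar_change_level)
    from continuous_map_compose[OF this continuous_map_Etop_enat_infinity] show ?thesis
      by (simp add: infinity o_def)
  qed (use enat_case z w in auto)
qed

end

section \<open>Rescaling one generator\<close>

definition theta_scale :: "nat \<Rightarrow> 'r::comm_ring_1 \<Rightarrow> (nat set \<Rightarrow> 'r) \<Rightarrow> nat set \<Rightarrow> 'r" where
  "theta_scale p c a = (\<lambda>K. if p \<in> K then c * a K else a K)"

lemma gmul_theta_scale: "gmul (theta_scale p c a) (theta_scale p c b) = theta_scale p c (gmul a b)"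
proof
  fix K
  show "gmul (theta_scale p c a) (theta_scale p c b) K = theta_scale p c (gmul a b) K"
  proof (cases "p \<in> K")
    case True
    txt \<open>Exactly one of I and K - I contains p.\<close>
    have "gmul (theta_scale p c a) (theta_scale p c b) K
          = (\<Sum>I\<in>Pow K. c * (gsign I (K - I) * a I * b (K - I)))"
      unfolding gmul_def theta_scale_def by (rule sum.cong) (use True in auto)
    then show ?thesis
      unfolding gmul_def theta_scale_def using True by (simp add: sum_distrib_left)
  next
    case False
    then show ?thesis
      unfolding gmul_def theta_scale_def by (auto intro!: sum.cong)
  qed
qed

lemma gmorph_theta_scale: "gmorph n n (theta_scale p c)"
  unfolding gmorph_def
proof (intro conjI ballI allI impI)
  fix a :: "nat set \<Rightarrow> 'a"
  assume "a \<in> Lam n"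
  then show "theta_scale p c a \<in> Lam n"
    unfolding Lam_def theta_scale_def by (auto elim!: rev_finite_subset) (metis mult_zero_right)
next
  fix a b :: "nat set \<Rightarrow> 'a"
  show "theta_scale p c (gadd a b) = gadd (theta_scale p c a) (theta_scale p c b)"
    unfolding theta_scale_def gadd_def by (auto simp: distrib_left)
  show "theta_scale p c (gmul a b) = gmul (theta_scale p c a) (theta_scale p c b)"
    by (simp add: gmul_theta_scale)
next
  fix r and a :: "nat set \<Rightarrow> 'a"
  show "theta_scale p c (gscale r a) = gscale r (theta_scale p c a)"
    unfolding theta_scale_def gscale_def by (auto simp: mult.left_commute)
next
  show "theta_scale p c gone = gone"
    unfolding theta_scale_def gone_def gbasis_def by auto
next
  fix a :: "nat set \<Rightarrow> 'a"
  show "geven a \<Longrightarrow> geven (theta_scale p c a)" and "godd a \<Longrightarrow> godd (theta_scale p c a)"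
    unfolding geven_def godd_def theta_scale_def by auto
qed

lemma Emap_diagonal:
  assumes "module s" and "finite {I. x I \<noteq> 0}"
    and diag: "\<And>I J. \<phi> (gbasis I) J = (if I = J then k J else 0)"
  shows "Emap s \<phi> x = (\<lambda>J. s (k J) (x J))"
proof
  interpret module s by fact
  fix J
  have "Emap s \<phi> x J = (\<Sum>I\<in>{I. x I \<noteq> 0}. if I = J then s (k J) (x I) else 0)"
    unfolding Emap_def diag by (rule sum.cong) auto
  also have "\<dots> = s (k J) (x J)"
    using assms(2) by (simp add: sum.delta')
  finally show "Emap s \<phi> x J = s (k J) (x J)" .
qed

lemma Emap_theta_scale:
  assumes "module s" and "finite {I. x I \<noteq> 0}"
  shows "Emap s (theta_scale p c) x = (\<lambda>J. if p \<in> J then s c (x J) else x J)"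
proof -
  have "Emap s (theta_scale p c) x = (\<lambda>J. s (if p \<in> J then c else 1) (x J))"
    by (rule Emap_diagonal[OF assms]) (auto simp: theta_scale_def gbasis_def)
  then show ?thesis
    by (auto simp: module.scale_one[OF assms(1)])
qed

lemma Emap_geps:
  assumes "module s" and "finite {I. x I \<noteq> 0}"
  shows "Emap s geps x = (\<lambda>J. if J = {} then x {} else 0)"
proof -
  have "Emap s geps x = (\<lambda>J. s (if J = {} then 1 else 0) (x J))"
    by (rule Emap_diagonal[OF assms]) (auto simp: geps_def gbasis_def)
  then show ?thesis
    by (auto simp: module.scale_one[OF assms(1)] module.scale_zero_left[OF assms(1)])
qed

definition theta_part :: "nat \<Rightarrow> (nat set \<Rightarrow> 'e::zero) \<Rightarrow> nat set \<Rightarrow> 'e" where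
  "theta_part p x = (\<lambda>J. if p \<in> J then x J else 0)"

definition theta_free_part :: "nat \<Rightarrow> (nat set \<Rightarrow> 'e::zero) \<Rightarrow> nat set \<Rightarrow> 'e" where
  "theta_free_part p x = (\<lambda>J. if p \<notin> J then x J else 0)"

lemma vadd_theta_free_part_theta_part: "vadd (theta_free_part p x) (theta_part p x) = x"
  by (auto simp: vadd_def theta_part_def theta_free_part_def)

lemma theta_free_part_idem: "theta_free_part p (theta_free_part p x) = theta_free_part p x"
  by (auto simp: theta_free_part_def)

context
  fixes s :: "'r::{comm_ring_1,topological_space} \<Rightarrow> 'e::{topological_ab_group_add,t2_space} \<Rightarrow> 'e"
    and A B :: "'e set"
  assumes graded: "graded_top_module s A B"
begin

interpretation M: module s
  using graded by (rule graded_top_module_module)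

lemma Ebar_ideal_subset_Ebar: "Ebar_ideal A B n p \<subseteq> Ebar A B n"
  unfolding Ebar_ideal_def by auto

lemma Ebar_ideal_vadd:
  "v \<in> Ebar_ideal A B n p \<Longrightarrow> w \<in> Ebar_ideal A B n p \<Longrightarrow> vadd v w \<in> Ebar_ideal A B n p"
  unfolding Ebar_ideal_def using Ebar_vadd[OF graded] by (auto simp: vadd_def)

lemma Ebar_ideal_vscale: "w \<in> Ebar_ideal A B n p \<Longrightarrow> vscale s c w \<in> Ebar_ideal A B n p"
  unfolding Ebar_ideal_def using Ebar_vscale[OF graded] by (auto simp: vscale_def)

lemma zero_in_Ebar_ideal: "(\<lambda>_. 0) \<in> Ebar_ideal A B n p"
  using graded_top_module_subspaces[OF graded]
  unfolding Ebar_ideal_def Ebar_def TE_def by (auto simp: M.subspace_0)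

lemma theta_part_in_Ebar_ideal: "x \<in> Ebar A B n \<Longrightarrow> theta_part p x \<in> Ebar_ideal A B n p"
  unfolding Ebar_ideal_def theta_part_def using Ebar_restrict[OF graded] by auto

lemma theta_free_part_in_Ebar: "x \<in> Ebar A B n \<Longrightarrow> theta_free_part p x \<in> Ebar A B n"
  unfolding theta_free_part_def by (rule Ebar_restrict[OF graded])

end

section \<open>C^1 maps natural under rescaling of a generator\<close>

lemma continuous_map_C1_dom_enat_infinity:
  assumes "V \<subseteq> V'"
  shows "continuous_map
    (subtopology (prod_topology (Etop A B (enat N)) (prod_topology (Etop A B (enat N)) euclidean))
      (C1_dom s (Etop A B (enat N)) V))
    (subtopology (prod_topology (Etop A B \<infinity>) (prod_topology (Etop A B \<infinity>) euclidean))
      (C1_dom s (Etop A B \<infinity>) V'))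
    (\<lambda>x. x)"
proof -
  let ?XN = "Etop A B (enat N)" and ?XI = "Etop A B \<infinity>"
  have incl: "continuous_map ?XN ?XI (\<lambda>x. x)"
    by (rule continuous_map_Etop_enat_infinity)
  have "continuous_map (prod_topology ?XN euclidean) (prod_topology ?XI euclidean) (\<lambda>(x, y). (x, y))"
    by (rule continuous_map_prod_top[THEN iffD2]) (simp add: incl)
  then have "continuous_map (prod_topology ?XN (prod_topology ?XN euclidean))
               (prod_topology ?XI (prod_topology ?XI euclidean)) (\<lambda>(x, y). (x, y))"
    by (intro continuous_map_prod_top[THEN iffD2] disjI2 conjI incl) (simp add: case_prod_Pair_iden id_def)
  then have "continuous_map (prod_topology ?XN (prod_topology ?XN euclidean))
               (prod_topology ?XI (prod_topology ?XI euclidean)) (\<lambda>x. x)"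
    by (simp add: case_prod_Pair_iden id_def)
  moreover have "C1_dom s ?XN V \<subseteq> C1_dom s ?XI V'"
    unfolding C1_dom_def topspace_Etop using assms Ebar_enat_subset_infinity[of A B N] by blast
  ultimately show ?thesis
    unfolding continuous_map_in_subtopology by (auto intro: continuous_map_from_subtopology)
qed

lemma eq_if_eq_on_dense_units:
  fixes h :: "'r::{comm_ring_1,topological_space} \<Rightarrow> 'a::t2_space"
  assumes "closure {u::'r. \<exists>v. u * v = 1} = UNIV" and "continuous_on UNIV h"
    and "\<And>t. \<exists>v. t * v = 1 \<Longrightarrow> h t = c"
  shows "h t = c"
  using continuous_constant_on_closure[of "{u. \<exists>v. u * v = 1}" h c t] assms by auto

lemma (in module) scale_cancel_unit:
  assumes "t * u = 1" and "scale t x = scale t y"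
  shows "x = y"
proof -
  have "x = scale (u * t) x"
    using assms(1) by (simp add: mult.commute)
  also have "\<dots> = scale (u * t) y"
    using assms(2) by (simp flip: scale_scale)
  also have "\<dots> = y"
    using assms(1) by (simp add: mult.commute)
  finally show ?thesis .
qed

lemma C1_wit_value_at_zero:
  fixes sE :: "'r::{comm_ring_1,topological_space} \<Rightarrow> 'e::ab_group_add \<Rightarrow> 'e"
    and sF :: "'r \<Rightarrow> 'f::{ab_group_add,t2_space} \<Rightarrow> 'f"
  assumes units_dense: "closure {u::'r. \<exists>v. u * v = 1} = UNIV"
    and "module sF"
    and wit: "C1_wit sE sF X Y V f g1"
    and line: "continuous_map euclidean X z"
    and dom: "\<And>t. (z t, w, t) \<in> C1_dom sE X V"
    and eval: "continuous_map Y euclidean (\<lambda>F. F J)"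
    and quotient: "\<And>t. \<exists>u. t * u = 1 \<Longrightarrow> f (vadd (z t) (vscale sE t w)) J - f (z t) J = sF t c"
  shows "g1 (z 0, w, 0) J = c"
proof -
  let ?D = "subtopology (prod_topology X (prod_topology X euclidean)) (C1_dom sE X V)"
  have "w \<in> topspace X"
    using dom[of 0] by (simp add: C1_dom_def)
  then have "continuous_map euclidean (prod_topology X (prod_topology X euclidean)) (\<lambda>t. (z t, w, t))"
    by (intro continuous_map_pairedI line) (simp_all add: continuous_on_id)
  then have "continuous_map euclidean ?D (\<lambda>t. (z t, w, t))"
    unfolding continuous_map_in_subtopology using dom by blast
  moreover have "continuous_map ?D Y g1"
    using wit by (simp add: C1_wit_def)
  ultimately have "continuous_map euclidean euclidean ((\<lambda>F. F J) \<circ> (g1 \<circ> (\<lambda>t. (z t, w, t))))"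
    by (intro continuous_map_compose[OF _ eval] continuous_map_compose)
  then have "continuous_on UNIV (\<lambda>t. g1 (z t, w, t) J)"
    by (simp add: o_def)
  moreover have "g1 (z t, w, t) J = c" if unit: "\<exists>u. t * u = 1" for t
  proof -
    obtain u where tu: "t * u = 1"
      using unit by blast
    have "vdiff (f (vadd (z t) (vscale sE t w))) (f (z t)) = vscale sF t (g1 (z t, w, t))"
      using wit dom[of t] unfolding C1_wit_def by blast
    then have "f (vadd (z t) (vscale sE t w)) J - f (z t) J = sF t (g1 (z t, w, t) J)"
      unfolding vdiff_def vscale_def by meson
    then have "sF t (g1 (z t, w, t) J) = sF t c"
      using quotient[OF unit] by simp
    then show ?thesis
      by (rule module.scale_cancel_unit[OF \<open>module sF\<close> tu])
  qed
  ultimately show ?thesis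
    using eq_if_eq_on_dense_units[OF units_dense] by blast
qed

text \<open>V is one level of an open subfunctor: membership only depends on the body x {}.\<close>

locale theta_natural_C1 =
  fixes sE :: "'r::{comm_ring_1,topological_space} \<Rightarrow> 'e::{topological_ab_group_add,t2_space} \<Rightarrow> 'e"
    and sF :: "'r \<Rightarrow> 'f::{topological_ab_group_add,t2_space} \<Rightarrow> 'f"
    and E0 E1 :: "'e set" and F0 F1 :: "'f set"
    and n :: enat and V :: "(nat set \<Rightarrow> 'e) set" and f :: "(nat set \<Rightarrow> 'e) \<Rightarrow> nat set \<Rightarrow> 'f"
    and g1 :: "(nat set \<Rightarrow> 'e) \<times> (nat set \<Rightarrow> 'e) \<times> 'r \<Rightarrow> nat set \<Rightarrow> 'f"
    and p :: nat
  assumes units_dense: "closure {u::'r. \<exists>v. u * v = 1} = UNIV"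
    and E_graded: "graded_top_module sE E0 E1"
    and F_graded: "graded_top_module sF F0 F1"
    and V_subset: "V \<subseteq> Ebar E0 E1 n"
    and V_body: "\<And>x z. x \<in> V \<Longrightarrow> z \<in> Ebar E0 E1 n \<Longrightarrow> z {} = x {} \<Longrightarrow> z \<in> V"
    and f_in: "\<And>x. x \<in> V \<Longrightarrow> f x \<in> Ebar F0 F1 n"
    and f_theta_scale: "\<And>c x. x \<in> V \<Longrightarrow> Emap sF (theta_scale p c) (f x) = f (Emap sE (theta_scale p c) x)"
    and C1_wit: "C1_wit sE sF (Etop E0 E1 n) (Etop F0 F1 n) V f g1"
begin

sublocale E: module sE
  using E_graded by (rule graded_top_module_module)

sublocale F: module sF
  using F_graded by (rule graded_top_module_module)

abbreviation ideal :: "(nat set \<Rightarrow> 'e) set" where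
  "ideal \<equiv> Ebar_ideal E0 E1 n p"

lemma ideal_subset_Ebar: "w \<in> ideal \<Longrightarrow> w \<in> Ebar E0 E1 n"
  using Ebar_ideal_subset_Ebar[OF E_graded] by blast

lemma V_vadd_ideal:
  assumes x: "x \<in> V" and w: "w \<in> ideal"
  shows "vadd x w \<in> V"
proof (rule V_body[OF x])
  show "vadd x w \<in> Ebar E0 E1 n"
    using x w V_subset ideal_subset_Ebar by (blast intro: Ebar_vadd[OF E_graded])
  show "vadd x w {} = x {}"
    using w by (simp add: vadd_def Ebar_ideal_def)
qed

lemma V_theta_free_part:
  assumes x: "x \<in> V"
  shows "theta_free_part p x \<in> V"
proof (rule V_body[OF x])
  show "theta_free_part p x \<in> Ebar E0 E1 n"
    using x V_subset by (blast intro: theta_free_part_in_Ebar[OF E_graded])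
qed (simp add: theta_free_part_def)

lemma f_finite_support: "x \<in> V \<Longrightarrow> finite {I. f x I \<noteq> 0}"
  using f_in Ebar_subset_TE TE_finite_support by blast

lemma vadd_vscale_zero: "vadd a (vscale sE 0 w) = a"
  by (simp add: vadd_def vscale_def)

definition theta_increment :: "(nat set \<Rightarrow> 'e) \<Rightarrow> (nat set \<Rightarrow> 'e) \<Rightarrow> nat set \<Rightarrow> 'f" where
  "theta_increment a w = theta_part p (f (vadd a w))"

text \<open>Here a + c w is the image of a + w under theta_scale p c, so naturality of f does the work.\<close>

lemma f_along_ideal:
  assumes a: "a \<in> V" "theta_free_part p a = a" and w: "w \<in> ideal"
  shows "f (vadd a (vscale sE c w)) J = f a J + sF c (theta_increment a w J)"
proof -
  define F where "F = f (vadd a w)"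
  have aw: "vadd a w \<in> V"
    using V_vadd_ideal a w by blast
  have f_line: "f (vadd a (vscale sE c' w)) = (\<lambda>J. if p \<in> J then sF c' (F J) else F J)" for c'
  proof -
    have "finite {I. vadd a w I \<noteq> 0}"
      using aw V_subset Ebar_subset_TE TE_finite_support by blast
    then have "Emap sE (theta_scale p c') (vadd a w) = (\<lambda>J. if p \<in> J then sE c' (vadd a w J) else vadd a w J)"
      by (rule Emap_theta_scale[OF E.module_axioms])
    also have "\<dots> = vadd a (vscale sE c' w)"
    proof
      fix J
      have "a J = 0" if "p \<in> J"
        using a(2) that by (metis theta_free_part_def)
      moreover have "w J = 0" if "p \<notin> J"
        using w that by (simp add: Ebar_ideal_def)
      ultimately show "(if p \<in> J then sE c' (vadd a w J) else vadd a w J) = vadd a (vscale sE c' w) J"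
        by (cases "p \<in> J") (simp_all add: vadd_def vscale_def)
    qed
    finally have "f (vadd a (vscale sE c' w)) = Emap sF (theta_scale p c') F"
      using f_theta_scale[OF aw] by (simp add: F_def)
    also have "\<dots> = (\<lambda>J. if p \<in> J then sF c' (F J) else F J)"
      using f_finite_support[OF aw] unfolding F_def by (rule Emap_theta_scale[OF F.module_axioms])
    finally show ?thesis .
  qed
  have "f a J = (if p \<in> J then 0 else F J)"
    using fun_cong[OF f_line[of 0], of J] by (simp add: vadd_vscale_zero)
  with fun_cong[OF f_line[of c], of J] show ?thesis
    by (simp add: theta_increment_def theta_part_def flip: F_def)
qed

lemma f_vadd_ideal:
  assumes "a \<in> V" "theta_free_part p a = a" and "w \<in> ideal"
  shows "f (vadd a w) J = f a J + theta_increment a w J"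
  using f_along_ideal[OF assms, of 1] by (simp add: vadd_def vscale_def)

lemma theta_increment_vscale:
  assumes a: "a \<in> V" "theta_free_part p a = a" and w: "w \<in> ideal"
  shows "theta_increment a (vscale sE c w) J = sF c (theta_increment a w J)"
  using f_vadd_ideal[OF a Ebar_ideal_vscale[OF E_graded w]] f_along_ideal[OF a w]
  by (simp add: vadd_def)

lemma g1_at_theta_free:
  assumes a: "a \<in> V" "theta_free_part p a = a" and w1: "w1 \<in> ideal" and w2: "w2 \<in> ideal"
  shows "g1 (a, w2, 0) J = theta_increment a (vadd w1 w2) J - theta_increment a w1 J"
proof -
  have "g1 (vadd a (vscale sE 0 w1), w2, 0) J = theta_increment a (vadd w1 w2) J - theta_increment a w1 J"
  proof (rule C1_wit_value_at_zero[OF units_dense F.module_axioms C1_wit])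
    show "continuous_map euclidean (Etop E0 E1 n) (\<lambda>t. vadd a (vscale sE t w1))"
      using a w1 V_subset ideal_subset_Ebar
      by (intro continuous_map_Etop_line[OF E_graded]) auto
    show "(vadd a (vscale sE t w1), w2, t) \<in> C1_dom sE (Etop E0 E1 n) V" for t
      using a w1 w2 V_vadd_ideal Ebar_ideal_vscale[OF E_graded] ideal_subset_Ebar
      by (auto simp: C1_dom_def topspace_Etop)
    show "continuous_map (Etop F0 F1 n) euclidean (\<lambda>F. F J)"
      by (rule continuous_map_Etop_eval)
  next
    fix t :: 'r
    have "vadd (vadd a (vscale sE t w1)) (vscale sE t w2) = vadd a (vscale sE t (vadd w1 w2))"
      by (auto simp: vadd_def vscale_def E.scale_right_distrib add.assoc)
    then show "f (vadd (vadd a (vscale sE t w1)) (vscale sE t w2)) J - f (vadd a (vscale sE t w1)) J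
               = sF t (theta_increment a (vadd w1 w2) J - theta_increment a w1 J)"
      using f_along_ideal[OF a Ebar_ideal_vadd[OF E_graded w1 w2]] f_along_ideal[OF a w1]
      by (simp add: F.scale_right_diff_distrib)
  qed
  then show ?thesis
    by (simp add: vadd_vscale_zero)
qed

lemma theta_increment_vadd:
  assumes a: "a \<in> V" "theta_free_part p a = a" and w1: "w1 \<in> ideal" and w2: "w2 \<in> ideal"
  shows "theta_increment a (vadd w1 w2) J = theta_increment a w1 J + theta_increment a w2 J"
proof -
  have "theta_increment a (\<lambda>_. 0) J = 0"
    using theta_increment_vscale[OF a w2, of 0 J] by (simp add: vscale_def)
  moreover have "vadd (\<lambda>_. 0) w2 = w2"
    by (simp add: vadd_def)
  ultimately show ?thesis
    using g1_at_theta_free[OF a w1 w2, of J] g1_at_theta_free[OF a zero_in_Ebar_ideal[OF E_graded] w2, of J]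
    by (simp add: algebra_simps)
qed

text \<open>Writing x as its theta_p-free part a plus an element of the ideal, additivity and homogeneity
  of theta_increment a make the difference quotient of f at x in direction y constant.\<close>

lemma f_vadd_ideal_eq_derivative:
  assumes x: "x \<in> V" and y: "y \<in> ideal"
  shows "f (vadd x y) = vadd (f x) (g1 (x, y, 0))"
proof -
  define a where "a = theta_free_part p x"
  define xp where "xp = theta_part p x"
  have a: "a \<in> V" "theta_free_part p a = a"
    unfolding a_def using V_theta_free_part[OF x] by (auto simp: theta_free_part_idem)
  have xp: "xp \<in> ideal"
    unfolding xp_def using V_subset x theta_part_in_Ebar_ideal[OF E_graded] by blast
  have x_split: "x = vadd a xp"
    by (simp add: a_def xp_def vadd_theta_free_part_theta_part)
  have f_line: "f (vadd x (vscale sE t y)) J = f x J + sF t (theta_increment a y J)" for t J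
  proof -
    have ty: "vscale sE t y \<in> ideal"
      using y by (rule Ebar_ideal_vscale[OF E_graded])
    have "vadd x (vscale sE t y) = vadd a (vadd xp (vscale sE t y))"
      unfolding x_split by (simp add: vadd_def add.assoc)
    then have "f (vadd x (vscale sE t y)) J = f a J + theta_increment a (vadd xp (vscale sE t y)) J"
      using f_vadd_ideal[OF a Ebar_ideal_vadd[OF E_graded xp ty]] by simp
    also have "\<dots> = f a J + theta_increment a xp J + sF t (theta_increment a y J)"
      using theta_increment_vadd[OF a xp ty] theta_increment_vscale[OF a y] by (simp add: add.assoc)
    also have "f a J + theta_increment a xp J = f x J"
      using f_vadd_ideal[OF a xp] x_split by simp
    finally show ?thesis .
  qed
  have g1_xy: "g1 (x, y, 0) J = theta_increment a y J" for J
  proof (rule C1_wit_value_at_zero[where z = "\<lambda>_. x", OF units_dense F.module_axioms C1_wit])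
    show "continuous_map euclidean (Etop E0 E1 n) (\<lambda>_. x)"
      using x V_subset by (auto simp: topspace_Etop)
    show "(x, y, t) \<in> C1_dom sE (Etop E0 E1 n) V" for t
      using x y V_vadd_ideal Ebar_ideal_vscale[OF E_graded] ideal_subset_Ebar
      by (auto simp: C1_dom_def topspace_Etop)
  qed (simp_all add: f_line continuous_map_Etop_eval)
  show ?thesis
  proof
    fix J
    show "f (vadd x y) J = vadd (f x) (g1 (x, y, 0)) J"
      using f_line[of 1 J] g1_xy[of J] by (simp add: vadd_def vscale_def)
  qed
qed

end

section \<open>Natural transformations on open subfunctors\<close>

locale natural_map_on_subfunctor =
  fixes sE :: "'r::{comm_ring_1,topological_space} \<Rightarrow> 'e::{topological_ab_group_add,t2_space} \<Rightarrow> 'e"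
    and sF :: "'r \<Rightarrow> 'f::{topological_ab_group_add,t2_space} \<Rightarrow> 'f"
    and E0 E1 :: "'e set" and F0 F1 :: "'f set"
    and U :: "enat \<Rightarrow> (nat set \<Rightarrow> 'e) set"
    and f :: "enat \<Rightarrow> (nat set \<Rightarrow> 'e) \<Rightarrow> nat set \<Rightarrow> 'f"
  assumes units_dense: "closure {u::'r. \<exists>v. u * v = 1} = UNIV"
    and E_graded: "graded_top_module sE E0 E1"
    and F_graded: "graded_top_module sF F0 F1"
    and U_def: "\<And>n. U n = {x \<in> Ebar E0 E1 n. Emap sE geps x \<in> U 0}"
    and f_continuous: "\<And>N::nat. continuous_map (subtopology (Etop E0 E1 (enat N)) (U (enat N)))
                               (Etop F0 F1 (enat N)) (f (enat N))"
    and f_natural: "\<And>(N::nat) (M::nat) \<phi>. gmorph (enat N) (enat M) \<phi> \<Longrightarrow>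
                  \<forall>x\<in>U (enat N). Emap sF \<phi> (f (enat N) x) = f (enat M) (Emap sE \<phi> x)"
    and f_infinity: "\<And>(N::nat) x. x \<in> U (enat N) \<Longrightarrow> f \<infinity> x = f (enat N) x"
begin

sublocale E: module sE
  using E_graded by (rule graded_top_module_module)

sublocale F: module sF
  using F_graded by (rule graded_top_module_module)

lemma U_subset_Ebar: "U n \<subseteq> Ebar E0 E1 n"
  using U_def[of n] by blast

lemma U_body:
  assumes x: "x \<in> U n" and z: "z \<in> Ebar E0 E1 n" and body: "z {} = x {}"
  shows "z \<in> U n"
proof -
  have fz: "finite {I. z I \<noteq> 0}" and fx: "finite {I. x I \<noteq> 0}"
    using x z U_subset_Ebar Ebar_subset_TE TE_finite_support by blast+
  have "Emap sE geps z = Emap sE geps x"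
    unfolding Emap_geps[OF E.module_axioms fz] Emap_geps[OF E.module_axioms fx] body ..
  then show ?thesis
    using x z U_def[of n] by auto
qed

lemma U_enat_subset_infinity: "U (enat N) \<subseteq> U \<infinity>"
  using U_def[of "enat N"] U_def[of \<infinity>] Ebar_enat_subset_infinity[of E0 E1 N] by blast

lemma U_infinity_level:
  assumes "x \<in> U \<infinity>"
  obtains N where "x \<in> U (enat N)"
proof -
  have x: "x \<in> Ebar E0 E1 \<infinity>"
    using assms U_subset_Ebar by blast
  then obtain N where "x \<in> TE (enat N)"
    using Ebar_subset_TE TE_infinity_level by blast
  with assms x have "x \<in> U (enat N)"
    using U_def[of "enat N"] U_def[of \<infinity>] Ebar_change_level by blast
  then show ?thesis
    by (rule that)
qed

lemma f_in_Ebar_enat: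
  assumes "x \<in> U (enat N)"
  shows "f (enat N) x \<in> Ebar F0 F1 (enat N)"
proof -
  have "x \<in> topspace (subtopology (Etop E0 E1 (enat N)) (U (enat N)))"
    using assms U_subset_Ebar by (auto simp: topspace_Etop)
  then show ?thesis
    using continuous_map_image_subset_topspace[OF f_continuous[of N]] by (auto simp: topspace_Etop)
qed

lemma f_in_Ebar: "x \<in> U n \<Longrightarrow> f n x \<in> Ebar F0 F1 n"
proof (cases n)
  case infinity
  assume "x \<in> U n"
  then obtain N where "x \<in> U (enat N)"
    using infinity U_infinity_level by blast
  then show ?thesis
    using infinity f_infinity f_in_Ebar_enat Ebar_enat_subset_infinity by fastforce
qed (simp add: f_in_Ebar_enat)

lemma U_theta_scale:
  assumes x: "x \<in> U n"
  shows "Emap sE (theta_scale p c) x \<in> U n"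
proof (rule U_body[OF x])
  have x_Ebar: "x \<in> Ebar E0 E1 n"
    using x U_subset_Ebar by blast
  have fin: "finite {I. x I \<noteq> 0}"
    using x_Ebar Ebar_subset_TE TE_finite_support by blast
  have "Emap sE (theta_scale p c) x = vadd (theta_free_part p x) (vscale sE c (theta_part p x))"
    unfolding Emap_theta_scale[OF E.module_axioms fin]
    by (rule ext) (simp add: vadd_def vscale_def theta_part_def theta_free_part_def)
  moreover have "theta_part p x \<in> Ebar E0 E1 n"
    using x_Ebar Ebar_ideal_subset_Ebar[OF E_graded] theta_part_in_Ebar_ideal[OF E_graded] by blast
  ultimately show "Emap sE (theta_scale p c) x \<in> Ebar E0 E1 n"
    using x_Ebar
    by (simp add: Ebar_vadd[OF E_graded] Ebar_vscale[OF E_graded] theta_free_part_in_Ebar[OF E_graded])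
  show "Emap sE (theta_scale p c) x {} = x {}"
    unfolding Emap_theta_scale[OF E.module_axioms fin] by simp
qed

lemma f_theta_scale:
  assumes x: "x \<in> U n"
  shows "Emap sF (theta_scale p c) (f n x) = f n (Emap sE (theta_scale p c) x)"
proof (cases n)
  case (enat N)
  then show ?thesis
    using x f_natural[OF gmorph_theta_scale] by blast
next
  case infinity
  obtain N where xN: "x \<in> U (enat N)"
    using x infinity U_infinity_level by blast
  then have "Emap sF (theta_scale p c) (f (enat N) x) = f (enat N) (Emap sE (theta_scale p c) x)"
    using f_natural[OF gmorph_theta_scale] by blast
  then show ?thesis
    using infinity f_infinity[OF xN] f_infinity[OF U_theta_scale[OF xN]] by simp
qed

lemma C1_wit_truncate:
  assumes wit: "C1_wit sE sF (Etop E0 E1 \<infinity>) (Etop F0 F1 \<infinity>) (U \<infinity>) (f \<infinity>) g"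
  shows "C1_wit sE sF (Etop E0 E1 (enat N)) (Etop F0 F1 (enat N)) (U (enat N)) (f (enat N))
           (truncate N \<circ> g)"
proof -
  let ?XN = "Etop E0 E1 (enat N)" and ?XI = "Etop E0 E1 \<infinity>"
  let ?DN = "subtopology (prod_topology ?XN (prod_topology ?XN euclidean)) (C1_dom sE ?XN (U (enat N)))"
  let ?DI = "subtopology (prod_topology ?XI (prod_topology ?XI euclidean)) (C1_dom sE ?XI (U \<infinity>))"
  have dom_subset: "C1_dom sE ?XN (U (enat N)) \<subseteq> C1_dom sE ?XI (U \<infinity>)"
    unfolding C1_dom_def topspace_Etop
    using U_enat_subset_infinity[of N] Ebar_enat_subset_infinity[of E0 E1 N] by blast
  have "continuous_map ?DN ?DI (\<lambda>x. x)"
    using U_enat_subset_infinity by (rule continuous_map_C1_dom_enat_infinity)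
  moreover have "continuous_map ?DI (Etop F0 F1 \<infinity>) g"
    using wit by (simp add: C1_wit_def)
  ultimately have "continuous_map ?DN (Etop F0 F1 (enat N)) (truncate N \<circ> (g \<circ> (\<lambda>x. x)))"
    by (intro continuous_map_compose[OF _ continuous_map_truncate[OF F_graded]] continuous_map_compose)
  moreover have "vdiff (f (enat N) (vadd x (vscale sE t v))) (f (enat N) x) = vscale sF t (truncate N (g (x, v, t)))"
    if dom: "(x, v, t) \<in> C1_dom sE ?XN (U (enat N))" for x v t
  proof
    fix J
    have xU: "x \<in> U (enat N)" and zU: "vadd x (vscale sE t v) \<in> U (enat N)"
      using dom by (auto simp: C1_dom_def)
    have "vdiff (f \<infinity> (vadd x (vscale sE t v))) (f \<infinity> x) = vscale sF t (g (x, v, t))"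
      using wit dom_subset dom unfolding C1_wit_def by blast
    then have diff: "vdiff (f (enat N) (vadd x (vscale sE t v))) (f (enat N) x) = vscale sF t (g (x, v, t))"
      using f_infinity[OF xU] f_infinity[OF zU] by simp
    show "vdiff (f (enat N) (vadd x (vscale sE t v))) (f (enat N) x) J = vscale sF t (truncate N (g (x, v, t))) J"
    proof (cases "J \<subseteq> {..<N}")
      case True
      then show ?thesis
        using diff by (simp add: truncate_def vscale_def)
    next
      case False
      then have "f (enat N) (vadd x (vscale sE t v)) J = 0" and "f (enat N) x J = 0"
        using f_in_Ebar[OF zU] f_in_Ebar[OF xU] Ebar_subset_TE TE_zero_outside by blast+
      then show ?thesis
        using False by (simp add: truncate_def vscale_def vdiff_def)
    qed
  qed
  ultimately show ?thesis
    unfolding C1_wit_def by (auto simp: o_def)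
qed

lemma theta_natural_C1_at_level:
  assumes "C1_wit sE sF (Etop E0 E1 n) (Etop F0 F1 n) (U n) (f n) g1"
  shows "theta_natural_C1 sE sF E0 E1 F0 F1 n (U n) (f n) g1 p"
  using assms units_dense E_graded F_graded U_subset_Ebar U_body f_in_Ebar f_theta_scale
  by unfold_locales blast+

lemma f_vadd_ideal_eq_dC1:
  assumes "\<exists>g1. C1_wit sE sF (Etop E0 E1 n) (Etop F0 F1 n) (U n) (f n) g1"
    and "x \<in> U n" and "y \<in> Ebar_ideal E0 E1 n p"
  shows "f n (vadd x y) = vadd (f n x) (dC1 sE sF (Etop E0 E1 n) (Etop F0 F1 n) (U n) (f n) x y)"
proof -
  let ?g1 = "SOME g1. C1_wit sE sF (Etop E0 E1 n) (Etop F0 F1 n) (U n) (f n) g1"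
  have "C1_wit sE sF (Etop E0 E1 n) (Etop F0 F1 n) (U n) (f n) ?g1"
    using assms(1) by (rule someI_ex)
  then interpret theta_natural_C1 sE sF E0 E1 F0 F1 n "U n" "f n" ?g1 p
    by (rule theta_natural_C1_at_level)
  show ?thesis
    unfolding dC1_def by (rule f_vadd_ideal_eq_derivative[OF assms(2,3)])
qed

lemma C1_wit_exists_of_is_C1_infinity:
  assumes "is_C1 sE sF (Etop E0 E1 \<infinity>) (Etop F0 F1 \<infinity>) (U \<infinity>) (f \<infinity>)"
  shows "\<exists>g1. C1_wit sE sF (Etop E0 E1 n) (Etop F0 F1 n) (U n) (f n) g1"
proof -
  obtain g where g: "C1_wit sE sF (Etop E0 E1 \<infinity>) (Etop F0 F1 \<infinity>) (U \<infinity>) (f \<infinity>) g"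
    using assms unfolding is_C1_def by blast
  show ?thesis
  proof (cases n)
    case (enat N)
    then show ?thesis
      using C1_wit_truncate[OF g] by blast
  qed (use g in blast)
qed

end

theorem proposition2p16:
  fixes sE :: "'r::{comm_ring_1,topological_ab_group_add,topological_semigroup_mult,t2_space} \<Rightarrow> 'e::{topological_ab_group_add,t2_space} \<Rightarrow> 'e"
    and sF :: "'r \<Rightarrow> 'f::{topological_ab_group_add,t2_space} \<Rightarrow> 'f"
    and E0 E1 :: "'e set" and F0 F1 :: "'f set"
    and U :: "enat \<Rightarrow> (nat set \<Rightarrow> 'e) set"
    and f :: "enat \<Rightarrow> (nat set \<Rightarrow> 'e) \<Rightarrow> (nat set \<Rightarrow> 'f)"
  assumes units_dense: "closure {u::'r. \<exists>v. u * v = 1} = UNIV"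
    and E_mod: "graded_top_module sE E0 E1"
    and F_mod: "graded_top_module sF F0 F1"
    and U_open: "\<And>N::nat. openin (Etop E0 E1 (enat N)) (U (enat N))"
    and U_sub: "\<And>n. U n = {x \<in> Ebar E0 E1 n. Emap sE geps x \<in> U 0}"
    and f_cont: "\<And>N::nat. continuous_map (subtopology (Etop E0 E1 (enat N)) (U (enat N)))
                               (Etop F0 F1 (enat N)) (f (enat N))"
    and f_nat: "\<And>(N::nat) (M::nat) \<phi>. gmorph (enat N) (enat M) \<phi> \<Longrightarrow>
                  \<forall>x\<in>U (enat N). Emap sF \<phi> (f (enat N) x) = f (enat M) (Emap sE \<phi> x)"
    and f_inf: "\<And>(N::nat) x. x \<in> U (enat N) \<Longrightarrow> f \<infinity> x = f (enat N) x"
  shows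
    "((\<forall>N::nat. is_C1 sE sF (Etop E0 E1 (enat N)) (Etop F0 F1 (enat N)) (U (enat N)) (f (enat N))) \<longrightarrow>
       (\<forall>N::nat. \<forall>x\<in>U (enat N). \<forall>p. p < N \<longrightarrow> (\<forall>y\<in>Ebar_ideal E0 E1 (enat N) p.
          f (enat N) (vadd x y) =
            vadd (f (enat N) x)
              (dC1 sE sF (Etop E0 E1 (enat N)) (Etop F0 F1 (enat N)) (U (enat N)) (f (enat N)) x y))))
     \<and>
     ((locally_kw (euclidean :: 'r topology) \<and> locally_kw (euclidean :: 'e topology) \<and>
       locally_kw (euclidean :: 'f topology) \<and>
       is_C1 sE sF (Etop E0 E1 \<infinity>) (Etop F0 F1 \<infinity>) (U \<infinity>) (f \<infinity>)) \<longrightarrow>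
       (\<forall>n::enat. \<forall>x\<in>U n. \<forall>p. enat p < n \<longrightarrow> (\<forall>y\<in>Ebar_ideal E0 E1 n p.
          f n (vadd x y) =
            vadd (f n x) (dC1 sE sF (Etop E0 E1 n) (Etop F0 F1 n) (U n) (f n) x y))))"
proof -
  interpret natural_map_on_subfunctor sE sF E0 E1 F0 F1 U f
    using units_dense E_mod F_mod U_sub f_cont f_nat f_inf by unfold_locales
  show ?thesis
  proof (intro conjI impI allI ballI)
    fix N x p y
    assume "\<forall>N. is_C1 sE sF (Etop E0 E1 (enat N)) (Etop F0 F1 (enat N)) (U (enat N)) (f (enat N))"
      and "x \<in> U (enat N)" and "y \<in> Ebar_ideal E0 E1 (enat N) p"
    then show "f (enat N) (vadd x y) = vadd (f (enat N) x)
                 (dC1 sE sF (Etop E0 E1 (enat N)) (Etop F0 F1 (enat N)) (U (enat N)) (f (enat N)) x y)"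
      by (intro f_vadd_ideal_eq_dC1) (auto simp: is_C1_def)
  next
    fix n x p y
    assume "locally_kw (euclidean :: 'r topology) \<and> locally_kw (euclidean :: 'e topology) \<and>
      locally_kw (euclidean :: 'f topology) \<and>
      is_C1 sE sF (Etop E0 E1 \<infinity>) (Etop F0 F1 \<infinity>) (U \<infinity>) (f \<infinity>)"
      and "x \<in> U n" and "y \<in> Ebar_ideal E0 E1 n p"
    then show "f n (vadd x y) = vadd (f n x) (dC1 sE sF (Etop E0 E1 n) (Etop F0 F1 n) (U n) (f n) x y)"
      by (intro f_vadd_ideal_eq_dC1 C1_wit_exists_of_is_C1_infinity) auto
  qed
qed

end
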